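(* Every real CPS tensor $\mathcal{A}\in\mathbb{R}^{n\times n\times n\times n}$ admits a decomposition \[ \mathcal{A}=\sum_{i=1}^r\lambda_i\, a_i\otimes a_i\otimes b_i\otimes b_i, \] with $\lambda_i\in\mathbb{R}$ and $a_i,b_i\in\mathbb{R}^n$ for $i=1,\dots,r$.
   Context: A real tensor $\mathcal{A}\in\mathbb{R}^{n\times n\times n\times n}$ is (real) conjugate partial-symmetric (CPS) if $\mathcal{A}_{ijkl}=\mathcal{A}_{klij}=\mathcal{A}_{jikl}=\mathcal{A}_{ijlk}$ for all indices. $(u\otimes v\otimes w\otimes z)_{ijkl}=u_iv_jw_kz_l$. *)

theory Defs
  imports "HOL-Analysis.Analysis"
begin

text \<open>A real fourth-order tensor in R^(n x n x n x n), indices ranging over a finite type 'n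
  with CARD('n) = n.\<close>
type_synonym 'n tensor4 = "'n \<Rightarrow> 'n \<Rightarrow> 'n \<Rightarrow> 'n \<Rightarrow> real"

definition cps :: "('n::finite) tensor4 \<Rightarrow> bool" where
  "cps A \<longleftrightarrow> (\<forall>i j k l. A i j k l = A k l i j \<and> A i j k l = A j i k l \<and> A i j k l = A i j l k)"

definition outer4 :: "real^'n \<Rightarrow> real^'n \<Rightarrow> real^'n \<Rightarrow> real^'n \<Rightarrow> ('n::finite) tensor4" where
  "outer4 u v w z = (\<lambda>i j k l. u $ i * v $ j * w $ k * z $ l)"

end

theory Submission
  imports Defs
begin

(* A tensor that is symmetric in its first and in its last pair of indices lies in the span of
   the products S_pq (x) S_st of the symmetric unit matrices S_pq = e_p e_q^T + e_q e_p^T.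
   Each S_pq is a combination of rank-one squares,
   S_pq = (e_p + e_q)(e_p + e_q)^T - e_p e_p^T - e_q e_q^T,
   and a product of two combinations of rank-one squares a a^T, b b^T is a combination of
   tensors a (x) a (x) b (x) b. *)

definition rank_one_comb :: "('n::finite \<Rightarrow> 'n \<Rightarrow> real) \<Rightarrow> bool" where
  "rank_one_comb M \<longleftrightarrow> (\<exists>(r::nat) (c::nat \<Rightarrow> real) (a::nat \<Rightarrow> real^'n).
     M = (\<lambda>i j. \<Sum>x<r. c x * (a x $ i * a x $ j)))"

definition aabb_comb :: "('n::finite) tensor4 \<Rightarrow> bool" where
  "aabb_comb T \<longleftrightarrow> (\<exists>(r::nat) (lam::nat \<Rightarrow> real) (a::nat \<Rightarrow> real^'n) (b::nat \<Rightarrow> real^'n).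
     T = (\<lambda>i j k l. \<Sum>p<r. lam p * outer4 (a p) (a p) (b p) (b p) i j k l))"

lemma aabb_comb_zero: "aabb_comb (\<lambda>i j k l. 0)"
  unfolding aabb_comb_def by (rule exI[where x = 0]) simp

lemma aabb_comb_add_outer4:
  assumes "aabb_comb T"
  shows "aabb_comb (\<lambda>i j k l. T i j k l + c * outer4 x x y y i j k l)"
proof -
  obtain r :: nat and lam a b where T: "T = (\<lambda>i j k l. \<Sum>p<r. lam p * outer4 (a p) (a p) (b p) (b p) i j k l)"
    using assms unfolding aabb_comb_def by blast
  have "(\<lambda>i j k l. T i j k l + c * outer4 x x y y i j k l) =
    (\<lambda>i j k l. \<Sum>p<Suc r. (lam(r := c)) p * outer4 ((a(r := x)) p) ((a(r := x)) p)
                                                    ((b(r := y)) p) ((b(r := y)) p) i j k l)"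
    by (simp add: T)
  then show ?thesis
    unfolding aabb_comb_def by blast
qed

lemma aabb_comb_outer4: "aabb_comb (\<lambda>i j k l. c * outer4 x x y y i j k l)"
  using aabb_comb_add_outer4[OF aabb_comb_zero, of c x y] by simp

lemma aabb_comb_add:
  assumes "aabb_comb T" "aabb_comb S"
  shows "aabb_comb (\<lambda>i j k l. T i j k l + S i j k l)"
proof -
  obtain r :: nat and lam a b where S: "S = (\<lambda>i j k l. \<Sum>p<r. lam p * outer4 (a p) (a p) (b p) (b p) i j k l)"
    using assms(2) unfolding aabb_comb_def by blast
  have "aabb_comb (\<lambda>i j k l. T i j k l + (\<Sum>p<m. lam p * outer4 (a p) (a p) (b p) (b p) i j k l))"
    for m
  proof (induction m)
    case 0
    then show ?case using assms(1) by simp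
  next
    case (Suc m)
    then show ?case
      using aabb_comb_add_outer4[OF Suc, of "lam m" "a m" "b m"] by (simp add: add.assoc)
  qed
  then show ?thesis
    unfolding S by simp
qed

lemma aabb_comb_sum:
  fixes f :: "'a \<Rightarrow> ('n::finite) tensor4"
  assumes "finite F" "\<And>x. x \<in> F \<Longrightarrow> aabb_comb (f x)"
  shows "aabb_comb (\<lambda>i j k l. \<Sum>x\<in>F. f x i j k l)"
  using assms
proof (induction F rule: finite_induct)
  case empty
  then show ?case using aabb_comb_zero by simp
next
  case (insert x F)
  then show ?case
    using aabb_comb_add[of "f x" "\<lambda>i j k l. \<Sum>x\<in>F. f x i j k l"] by simp
qed

lemma aabb_comb_tensor_product:
  assumes "rank_one_comb M" "rank_one_comb N"
  shows "aabb_comb (\<lambda>i j k l. M i j * N k l)"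
proof -
  obtain r :: nat and c a where M: "M = (\<lambda>i j. \<Sum>x<r. c x * (a x $ i * a x $ j))"
    using assms(1) unfolding rank_one_comb_def by blast
  obtain s :: nat and d b where N: "N = (\<lambda>k l. \<Sum>y<s. d y * (b y $ k * b y $ l))"
    using assms(2) unfolding rank_one_comb_def by blast
  have "(\<lambda>i j k l. M i j * N k l) =
    (\<lambda>i j k l. \<Sum>x<r. \<Sum>y<s. (c x * d y) * outer4 (a x) (a x) (b y) (b y) i j k l)"
    by (simp add: M N outer4_def sum_product mult_ac)
  moreover have "aabb_comb (\<lambda>i j k l. \<Sum>x<r. \<Sum>y<s. (c x * d y) * outer4 (a x) (a x) (b y) (b y) i j k l)"
    by (intro aabb_comb_sum aabb_comb_outer4 finite_lessThan)
  ultimately show ?thesis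
    by simp
qed

lemma rank_one_comb_scale:
  assumes "rank_one_comb M"
  shows "rank_one_comb (\<lambda>i j. e * M i j)"
proof -
  obtain r :: nat and c a where M: "M = (\<lambda>i j. \<Sum>x<r. c x * (a x $ i * a x $ j))"
    using assms unfolding rank_one_comb_def by blast
  define ec where "ec x = e * c x" for x
  have "(\<lambda>i j. e * M i j) = (\<lambda>i j. \<Sum>x<r. ec x * (a x $ i * a x $ j))"
    by (simp add: M ec_def sum_distrib_left mult.assoc)
  then show ?thesis
    unfolding rank_one_comb_def by blast
qed

definition sym_unit :: "'n \<Rightarrow> 'n \<Rightarrow> 'n \<Rightarrow> 'n \<Rightarrow> real" where
  "sym_unit p q i j = (if i = p \<and> j = q then 1 else 0) + (if i = q \<and> j = p then 1 else 0)"

lemma rank_one_comb_sym_unit: "rank_one_comb (sym_unit p q :: 'n::finite \<Rightarrow> 'n \<Rightarrow> real)"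
proof -
  define e :: "'n \<Rightarrow> real^'n" where "e t = axis t 1" for t
  define a :: "nat \<Rightarrow> real^'n" where "a x = (if x = 0 then e p + e q else if x = 1 then e p else e q)"
    for x
  define c :: "nat \<Rightarrow> real" where "c x = (if x = 0 then 1 else -1)" for x
  have e_nth: "e t $ i = (if i = t then 1 else 0)" for t i
    by (simp add: e_def axis_def)
  have "(\<Sum>x<3. c x * (a x $ i * a x $ j)) =
    (e p + e q) $ i * (e p + e q) $ j - e p $ i * e p $ j - e q $ i * e q $ j" for i j
    by (simp add: numeral_3_eq_3 a_def c_def)
  also have "\<dots> i j = sym_unit p q i j" for i j
    unfolding sym_unit_def vector_add_component e_nth
    by (cases "i = p"; cases "j = q"; cases "i = q"; cases "j = p"; simp)
  finally have "sym_unit p q = (\<lambda>i j. \<Sum>x<3. c x * (a x $ i * a x $ j))"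
    by auto
  then show ?thesis
    unfolding rank_one_comb_def by blast
qed

lemma sum_sym_unit:
  fixes f :: "'n::finite \<Rightarrow> 'n \<Rightarrow> real"
  shows "(\<Sum>s\<in>UNIV. \<Sum>t\<in>UNIV. f s t * sym_unit s t k l) = f k l + f l k"
proof -
  have "(\<Sum>t\<in>UNIV. f s t * sym_unit s t k l) =
    (if s = k then f s l else 0) + (if s = l then f s k else 0)" for s
    by (simp add: sym_unit_def distrib_left sum.distrib if_distrib[of "\<lambda>x. f s _ * x"] cong: if_cong)
  then show ?thesis
    by (simp add: sum.distrib)
qed

lemma expansion_in_sym_units:
  fixes A :: "('n::finite) tensor4"
  assumes sym_ij: "\<And>i j k l. A i j k l = A j i k l"
    and sym_kl: "\<And>i j k l. A i j k l = A i j l k"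
  shows "A = (\<lambda>i j k l. \<Sum>p\<in>UNIV. \<Sum>q\<in>UNIV. \<Sum>s\<in>UNIV. \<Sum>t\<in>UNIV.
                          (A p q s t / 4 * sym_unit p q i j) * sym_unit s t k l)"
proof (intro ext)
  fix i j k l
  have "A i j k l = A i j k l / 2 + A j i k l / 2"
    using sym_ij[of j i k l] by simp
  also have "\<dots> = (\<Sum>p\<in>UNIV. \<Sum>q\<in>UNIV. A p q k l / 2 * sym_unit p q i j)"
    by (rule sum_sym_unit[symmetric])
  also have "\<dots> = (\<Sum>p\<in>UNIV. \<Sum>q\<in>UNIV. sym_unit p q i j / 4 *
                       (\<Sum>s\<in>UNIV. \<Sum>t\<in>UNIV. A p q s t * sym_unit s t k l))"
    by (simp add: sum_sym_unit sym_kl[of _ _ l k])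
  also have "\<dots> = (\<Sum>p\<in>UNIV. \<Sum>q\<in>UNIV. \<Sum>s\<in>UNIV. \<Sum>t\<in>UNIV.
                       (A p q s t / 4 * sym_unit p q i j) * sym_unit s t k l)"
    by (simp add: sum_distrib_left mult_ac)
  finally show "A i j k l = \<dots>" .
qed

theorem theorem3p4:
  fixes A :: "('n::finite) tensor4"
  assumes "cps A"
  shows "\<exists>(r::nat) (lam::nat \<Rightarrow> real) (a::nat \<Rightarrow> real^'n) (b::nat \<Rightarrow> real^'n).
           A = (\<lambda>i j k l. \<Sum>p<r. lam p * outer4 (a p) (a p) (b p) (b p) i j k l)"
proof -
  have "A i j k l = A j i k l" "A i j k l = A i j l k" for i j k l
    using assms unfolding cps_def by blast+
  then have A: "A = (\<lambda>i j k l. \<Sum>p\<in>UNIV. \<Sum>q\<in>UNIV. \<Sum>s\<in>UNIV. \<Sum>t\<in>UNIV.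
                                   (A p q s t / 4 * sym_unit p q i j) * sym_unit s t k l)"
    by (rule expansion_in_sym_units)
  have summand: "aabb_comb (\<lambda>i j k l. (A p q s t / 4 * sym_unit p q i j) * sym_unit s t k l)"
    for p q s t
    by (intro aabb_comb_tensor_product rank_one_comb_scale rank_one_comb_sym_unit)
  have "aabb_comb (\<lambda>i j k l. \<Sum>p\<in>UNIV. \<Sum>q\<in>UNIV. \<Sum>s\<in>UNIV. \<Sum>t\<in>UNIV.
                                 (A p q s t / 4 * sym_unit p q i j) * sym_unit s t k l)"
    by (rule aabb_comb_sum[OF finite])+ (rule summand)
  then have "aabb_comb A"
    by (simp only: A[symmetric])
  then show ?thesis
    unfolding aabb_comb_def .
qed

end
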